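(* For every $\lambda>0$, $\mathrm{KD}_\lambda$ is a metric on $V$: for all $x,y,z\in V$, (1) $\mathrm{KD}_\lambda(x,y)=0$ if and only if $x=y$; (2) $\mathrm{KD}_\lambda(x,y)=\mathrm{KD}_\lambda(y,x)$; (3) $\mathrm{KD}_\lambda(x,z)\le\mathrm{KD}_\lambda(x,y)+\mathrm{KD}_\lambda(y,z)$.
   Context: Let $H=(V,E,w)$ be a weighted hypergraph: $V$ is a finite set, $E$ a set of nonempty subsets of $V$, $w\colon E\to\mathbb{R}_{>0}$. Write $x\sim y$ if some $e\in E$ contains both; $H$ is assumed connected. The degree is $d_x=\sum_{e\ni x}w_e>0$, $D=\mathrm{diag}(d_x)$. The distance $d(x,y)$ is the minimal $n$ with a chain $x=z_0\sim\cdots\sim z_n=y$. $\delta_x$ is the indicator of $x$. $\mathbb{R}^V$ carries the inner product $\langle f,g\rangle=\sum_x f(x)g(x)/d_x$ with norm $\|\cdot\|$. For $e\in E$ let $B_e=\mathrm{Conv}\{\delta_x-\delta_y : x,y\in e\}$. The multivalued hypergraph Laplacian is $L(f)=\{\sum_{e}w_e\mathtt{b}_e(\mathtt{b}_e^\top f) : \mathtt{b}_e\in\operatorname{argmax}_{\mathtt b\in B_e}\mathtt b^\top f\}$ and the normalized Laplacian is $\mathcal{L}f=L(D^{-1}f)$, a maximal monotone operator on $(\mathbb{R}^V,\langle\cdot,\cdot\rangle)$. For $\lambda>0$ the resolvent $J_\lambda=(I+\lambda\mathcal L)^{-1}$ is a single-valued map $\mathbb{R}^V\to\mathbb{R}^V$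 (equivalently $J_\lambda f=\operatorname{argmin}_g\{\frac{1}{2\lambda}\|f-g\|^2+Q(D^{-1}g)\}$, $Q(g)=\frac12\sum_e w_e\max_{x,y\in e}(g(x)-g(y))^2$). A function $f$ is weighted $1$-Lipschitz if $|f(x)/d_x-f(y)/d_y|\le d(x,y)$ for all $x,y$; $\mathrm{Lip}^1_w(V)$ denotes the set of such functions. $\mathrm{KD}_\lambda(x,y)=\sup\{\langle J_\lambda f,\delta_x-\delta_y\rangle : f\in\mathrm{Lip}^1_w(V)\}$. *)

theory Defs
  imports "HOL-Analysis.Analysis"
begin

definition hadj :: "'v set set \<Rightarrow> 'v \<Rightarrow> 'v \<Rightarrow> bool" where
  "hadj E x y \<longleftrightarrow> (\<exists>e\<in>E. x \<in> e \<and> y \<in> e)"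

definition hyper_graph :: "'v set set \<Rightarrow> ('v set \<Rightarrow> real) \<Rightarrow> bool" where
  "hyper_graph E w \<longleftrightarrow> (\<forall>e\<in>E. e \<noteq> {} \<and> w e > 0)"

definition hconnected :: "'v set set \<Rightarrow> bool" where
  "hconnected E \<longleftrightarrow> (\<forall>x y. (x, y) \<in> {(a, b). hadj E a b}\<^sup>*)"

definition hdeg :: "'v set set \<Rightarrow> ('v set \<Rightarrow> real) \<Rightarrow> 'v \<Rightarrow> real" where
  "hdeg E w x = (\<Sum>e\<in>{e\<in>E. x \<in> e}. w e)"

definition hdist :: "'v set set \<Rightarrow> 'v \<Rightarrow> 'v \<Rightarrow> nat" where
  "hdist E x y = (LEAST n. (x, y) \<in> {(a, b). hadj E a b} ^^ n)"

definition delta :: "'v::finite \<Rightarrow> real^'v" where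
  "delta x = axis x 1"

definition wip :: "'v set set \<Rightarrow> ('v set \<Rightarrow> real) \<Rightarrow> real^'v::finite \<Rightarrow> real^'v \<Rightarrow> real" where
  "wip E w f g = (\<Sum>x\<in>UNIV. f $ x * g $ x / hdeg E w x)"

definition Bset :: "'v::finite set \<Rightarrow> (real^'v) set" where
  "Bset e = convex hull {delta x - delta y | x y. x \<in> e \<and> y \<in> e}"

definition hLap :: "'v::finite set set \<Rightarrow> ('v set \<Rightarrow> real) \<Rightarrow> real^'v \<Rightarrow> (real^'v) set" where
  "hLap E w f = {(\<Sum>e\<in>E. (w e * (b e \<bullet> f)) *\<^sub>R b e) | b.
      \<forall>e\<in>E. b e \<in> Bset e \<and> (\<forall>c\<in>Bset e. c \<bullet> f \<le> b e \<bullet> f)}"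

definition Dinv :: "'v set set \<Rightarrow> ('v set \<Rightarrow> real) \<Rightarrow> real^'v::finite \<Rightarrow> real^'v" where
  "Dinv E w f = (\<chi> x. f $ x / hdeg E w x)"

definition nLap :: "'v::finite set set \<Rightarrow> ('v set \<Rightarrow> real) \<Rightarrow> real^'v \<Rightarrow> (real^'v) set" where
  "nLap E w f = hLap E w (Dinv E w f)"

text \<open>Resolvent J_lambda = (I + lambda L)^{-1}: the unique g with f \<in> g + lambda L g.\<close>
definition resolvent :: "'v::finite set set \<Rightarrow> ('v set \<Rightarrow> real) \<Rightarrow> real \<Rightarrow> real^'v \<Rightarrow> real^'v" where
  "resolvent E w lam f = (THE g. f \<in> (\<lambda>u. g + lam *\<^sub>R u) ` nLap E w g)"

definition wLip1 :: "'v::finite set set \<Rightarrow> ('v set \<Rightarrow> real) \<Rightarrow> (real^'v) set" where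
  "wLip1 E w = {f. \<forall>x y. \<bar>f $ x / hdeg E w x - f $ y / hdeg E w y\<bar> \<le> real (hdist E x y)}"

definition KD :: "'v::finite set set \<Rightarrow> ('v set \<Rightarrow> real) \<Rightarrow> real \<Rightarrow> 'v \<Rightarrow> 'v \<Rightarrow> real" where
  "KD E w lam x y = (SUP f\<in>wLip1 E w. wip E w (resolvent E w lam f) (delta x - delta y))"

end

theory Submission
  imports Defs
begin

text \<open>Write \<open>\<phi>\<^sub>f(x) = (J\<^sub>\<lambda> f)(x) / d\<^sub>x\<close>, so that \<open>KD\<^sub>\<lambda>(x,y)\<close> is the supremum of
  \<open>\<phi>\<^sub>f(x) - \<phi>\<^sub>f(y)\<close> over the weighted Lipschitz functions \<open>f\<close>. This class is closed under
  negation and \<open>J\<^sub>\<lambda>\<close> is odd, so such a supremum is a pseudometric as soon as it is finite.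
  Finiteness: \<open>J\<^sub>\<lambda>\<close> commutes with adding multiples of the degree vector and does not increase
  the weighted norm, while a Lipschitz function vanishing at \<open>x\<close> has norm bounded in terms of
  the diameter. Definiteness: for \<open>x \<noteq> y\<close> a small multiple of \<open>D \<delta>\<^sub>x + \<lambda> u\<close> with
  \<open>u \<in> \<L>(\<delta>\<^sub>x)\<close> is Lipschitz, because distinct vertices are at distance at least \<open>1\<close>, and its
  resolvent is the corresponding multiple of \<open>D \<delta>\<^sub>x\<close>.

  All of this needs \<open>J\<^sub>\<lambda>\<close> to be well defined. Uniqueness follows from the monotonicity of
  the Laplacian. For existence, minimise \<open>\<parallel>f - g\<parallel>\<^sup>2/(2\<lambda>) + Q(D\<^sup>-\<^sup>1 g)\<close>; the
  Laplacian at a point is a closed convex set, so if the first-order condition failed, a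
  separating hyperplane would give a direction of descent.\<close>

lemma inner_delta [simp]: "delta a \<bullet> v = v $ a" "v \<bullet> delta a = v $ a"
  by (simp_all add: delta_def inner_axis inner_axis')

lemma delta_nth: "delta a $ z = (if z = a then 1 else 0)"
  by (simp add: delta_def axis_def)

definition edge_diffs :: "'v::finite set \<Rightarrow> (real^'v) set" where
  "edge_diffs e = {delta x - delta y | x y. x \<in> e \<and> y \<in> e}"

text \<open>The support function of \<open>Bset e\<close>, i.e. \<open>max\<^sub>x\<^sub>,\<^sub>y\<^sub>\<in>\<^sub>e (p x - p y)\<close>.\<close>
definition edge_osc :: "'v::finite set \<Rightarrow> real^'v \<Rightarrow> real" where
  "edge_osc e p = Max ((\<lambda>q. q \<bullet> p) ` edge_diffs e)"

definition edge_argmax :: "'v::finite set \<Rightarrow> real^'v \<Rightarrow> (real^'v) set" where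
  "edge_argmax e p = {b \<in> Bset e. b \<bullet> p = edge_osc e p}"

lemma finite_edge_diffs: "finite (edge_diffs e)"
  unfolding edge_diffs_def by (rule finite_image_set2) auto

lemma zero_in_edge_diffs: "e \<noteq> {} \<Longrightarrow> 0 \<in> edge_diffs e"
  unfolding edge_diffs_def by force

lemma Bset_eq_convex_hull: "Bset e = convex hull (edge_diffs e)"
  unfolding Bset_def edge_diffs_def ..

lemma edge_diffs_subset_Bset: "edge_diffs e \<subseteq> Bset e"
  unfolding Bset_eq_convex_hull by (rule hull_subset)

lemma compact_Bset: "compact (Bset e)"
  unfolding Bset_eq_convex_hull by (intro compact_convex_hull finite_imp_compact finite_edge_diffs)

lemma convex_Bset: "convex (Bset e)"
  unfolding Bset_eq_convex_hull by simp

lemma uminus_Bset: "b \<in> Bset e \<Longrightarrow> - b \<in> Bset e"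
proof -
  have "uminus ` edge_diffs e = edge_diffs e"
    unfolding edge_diffs_def by force
  then have "uminus ` Bset e = Bset e"
    unfolding Bset_eq_convex_hull using convex_hull_linear_image[OF linear_uminus] by metis
  then show "b \<in> Bset e \<Longrightarrow> - b \<in> Bset e" by force
qed

lemma Bset_orthogonal_const: "b \<in> Bset e \<Longrightarrow> b \<bullet> (\<chi> z. c) = 0"
proof -
  have "convex hull (edge_diffs e) \<subseteq> {b. (\<chi> z. c) \<bullet> b = 0}"
    by (rule hull_minimal) (auto simp: edge_diffs_def inner_diff_right convex_hyperplane)
  then show "b \<in> Bset e \<Longrightarrow> b \<bullet> (\<chi> z. c) = 0"
    unfolding Bset_eq_convex_hull by (auto simp: inner_commute)
qed

lemma edge_osc_attained:
  assumes "e \<noteq> {}" shows "\<exists>q\<in>edge_diffs e. q \<bullet> p = edge_osc e p"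
proof -
  have "edge_osc e p \<in> (\<lambda>q. q \<bullet> p) ` edge_diffs e"
    unfolding edge_osc_def using zero_in_edge_diffs[OF assms]
    by (intro Max_in) (auto simp: finite_edge_diffs)
  then show ?thesis by force
qed

lemma edge_diffs_inner_le_edge_osc: "q \<in> edge_diffs e \<Longrightarrow> q \<bullet> p \<le> edge_osc e p"
  unfolding edge_osc_def by (rule Max_ge) (auto simp: finite_edge_diffs)

lemma inner_le_edge_osc: "b \<in> Bset e \<Longrightarrow> b \<bullet> p \<le> edge_osc e p"
proof -
  have "convex hull (edge_diffs e) \<subseteq> {b. p \<bullet> b \<le> edge_osc e p}"
  proof (rule hull_minimal)
    show "convex {b. p \<bullet> b \<le> edge_osc e p}" by (rule convex_halfspace_le)
  qed (auto simp: inner_commute edge_diffs_inner_le_edge_osc)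
  then show "b \<in> Bset e \<Longrightarrow> b \<bullet> p \<le> edge_osc e p"
    unfolding Bset_eq_convex_hull by (auto simp: inner_commute)
qed

lemma edge_osc_le_iff:
  assumes "e \<noteq> {}" shows "edge_osc e p \<le> a \<longleftrightarrow> (\<forall>q\<in>edge_diffs e. q \<bullet> p \<le> a)"
  unfolding edge_osc_def using zero_in_edge_diffs[OF assms]
  by (subst Max_le_iff) (auto simp: finite_edge_diffs)

lemma edge_osc_nonneg: "e \<noteq> {} \<Longrightarrow> 0 \<le> edge_osc e p"
  using edge_diffs_inner_le_edge_osc[OF zero_in_edge_diffs] by simp

lemma Bset_argmax_iff:
  assumes "e \<noteq> {}"
  shows "(b \<in> Bset e \<and> (\<forall>c\<in>Bset e. c \<bullet> p \<le> b \<bullet> p)) \<longleftrightarrow> b \<in> edge_argmax e p"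
proof -
  obtain q where "q \<in> Bset e" "q \<bullet> p = edge_osc e p"
    using edge_osc_attained[OF assms] edge_diffs_subset_Bset by blast
  then have "b \<bullet> p = edge_osc e p" if "b \<in> Bset e" "\<forall>c\<in>Bset e. c \<bullet> p \<le> b \<bullet> p"
    using that(2) inner_le_edge_osc[OF that(1), of p] by fastforce
  then show ?thesis
    unfolding edge_argmax_def using inner_le_edge_osc by auto
qed

lemma edge_osc_add_const: "edge_osc e (p + (\<chi> z. c)) = edge_osc e p"
proof -
  have "q \<bullet> (p + (\<chi> z. c)) = q \<bullet> p" if "q \<in> edge_diffs e" for q
    using that edge_diffs_subset_Bset Bset_orthogonal_const[of q e c] by (auto simp: inner_add_right)
  then have "(\<lambda>q. q \<bullet> (p + (\<chi> z. c))) ` edge_diffs e = (\<lambda>q. q \<bullet> p) ` edge_diffs e"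
    by (rule image_cong[OF refl])
  then show ?thesis
    unfolding edge_osc_def by simp
qed

lemma edge_argmax_add_const: "edge_argmax e (p + (\<chi> z. c)) = edge_argmax e p"
  unfolding edge_argmax_def edge_osc_add_const by (auto simp: inner_add_right Bset_orthogonal_const)

lemma edge_argmax_eq_Int: "edge_argmax e p = Bset e \<inter> {b. p \<bullet> b \<ge> edge_osc e p}"
  unfolding edge_argmax_def using inner_le_edge_osc[of _ e p] by (auto simp: inner_commute intro: antisym)

lemma compact_edge_argmax: "compact (edge_argmax e p)"
  by (simp add: edge_argmax_eq_Int compact_Int_closed compact_Bset closed_halfspace_ge)

lemma convex_edge_argmax: "convex (edge_argmax e p)"
  by (simp add: edge_argmax_eq_Int convex_Int convex_Bset convex_halfspace_ge)

lemma convex_on_edge_osc: "convex_on UNIV (edge_osc e)"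
proof (cases "e = {}")
  case True
  then have "edge_diffs e = {}" by (simp add: edge_diffs_def)
  then show ?thesis unfolding edge_osc_def by (simp add: convex_on_const)
next
  case False
  show ?thesis
  proof (rule convex_onI)
    fix t x y assume t: "0 < t" "t < (1::real)"
    obtain q where q: "q \<in> edge_diffs e" "q \<bullet> ((1 - t) *\<^sub>R x + t *\<^sub>R y) = edge_osc e ((1 - t) *\<^sub>R x + t *\<^sub>R y)"
      using edge_osc_attained[OF False] by blast
    have "q \<bullet> ((1 - t) *\<^sub>R x + t *\<^sub>R y) = (1 - t) * (q \<bullet> x) + t * (q \<bullet> y)"
      by (simp add: inner_add_right)
    also have "\<dots> \<le> (1 - t) * edge_osc e x + t * edge_osc e y"
      using q(1) edge_diffs_subset_Bset t
      by (intro add_mono mult_left_mono inner_le_edge_osc) auto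
    finally show "edge_osc e ((1 - t) *\<^sub>R x + t *\<^sub>R y) \<le> (1 - t) * edge_osc e x + t * edge_osc e y"
      using q by simp
  qed simp
qed

lemma continuous_on_edge_osc [continuous_intros]:
  "continuous_on S g \<Longrightarrow> continuous_on S (\<lambda>x. edge_osc e (g x))"
  using convex_on_continuous[OF open_UNIV convex_on_edge_osc]
  by (rule continuous_on_compose2) auto

definition weighted_set_sum :: "'i set \<Rightarrow> ('i \<Rightarrow> real) \<Rightarrow> ('i \<Rightarrow> 'a::real_normed_vector set) \<Rightarrow> 'a set" where
  "weighted_set_sum I c A = {(\<Sum>i\<in>I. c i *\<^sub>R b i) | b. \<forall>i\<in>I. b i \<in> A i}"

lemma weighted_set_sum_insert:
  assumes "i \<notin> I" "finite I"
  shows "weighted_set_sum (insert i I) c A = (\<Union>x\<in>(\<lambda>a. c i *\<^sub>R a) ` A i. \<Union>y\<in>weighted_set_sum I c A. {x + y})"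
proof (intro equalityI subsetI)
  fix z assume "z \<in> weighted_set_sum (insert i I) c A"
  then obtain b where b: "\<forall>j\<in>insert i I. b j \<in> A j" "z = (\<Sum>j\<in>insert i I. c j *\<^sub>R b j)"
    unfolding weighted_set_sum_def by blast
  then have "z = c i *\<^sub>R b i + (\<Sum>j\<in>I. c j *\<^sub>R b j)" "(\<Sum>j\<in>I. c j *\<^sub>R b j) \<in> weighted_set_sum I c A"
    using assms unfolding weighted_set_sum_def by auto
  with b(1) show "z \<in> (\<Union>x\<in>(\<lambda>a. c i *\<^sub>R a) ` A i. \<Union>y\<in>weighted_set_sum I c A. {x + y})" by blast
next
  fix z assume "z \<in> (\<Union>x\<in>(\<lambda>a. c i *\<^sub>R a) ` A i. \<Union>y\<in>weighted_set_sum I c A. {x + y})"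
  then obtain a b where ab: "a \<in> A i" "\<forall>j\<in>I. b j \<in> A j" "z = c i *\<^sub>R a + (\<Sum>j\<in>I. c j *\<^sub>R b j)"
    unfolding weighted_set_sum_def by blast
  have "(\<Sum>j\<in>I. c j *\<^sub>R (b(i := a)) j) = (\<Sum>j\<in>I. c j *\<^sub>R b j)"
    using assms(1) by (intro sum.cong) auto
  then have "z = (\<Sum>j\<in>insert i I. c j *\<^sub>R (b(i := a)) j)"
    using ab(3) assms by simp
  moreover have "\<forall>j\<in>insert i I. (b(i := a)) j \<in> A j"
    using ab by auto
  ultimately show "z \<in> weighted_set_sum (insert i I) c A"
    unfolding weighted_set_sum_def by blast
qed

lemma compact_convex_weighted_set_sum:
  assumes "finite I" "\<And>i. i \<in> I \<Longrightarrow> compact (A i) \<and> convex (A i)"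
  shows "compact (weighted_set_sum I c A) \<and> convex (weighted_set_sum I c A)"
  using assms
proof (induction I rule: finite_induct)
  case empty
  have "weighted_set_sum {} c A = {0}" by (simp add: weighted_set_sum_def)
  then show ?case by simp
next
  case (insert i I)
  then show ?case
    unfolding weighted_set_sum_insert[OF insert(2,1)]
    by (intro conjI compact_sums' convex_sums compact_scaling convex_scaling) auto
qed

definition lap_energy :: "'v::finite set set \<Rightarrow> ('v set \<Rightarrow> real) \<Rightarrow> real^'v \<Rightarrow> real" where
  "lap_energy E w p = (\<Sum>e\<in>E. w e * (edge_osc e p)\<^sup>2 / 2)"

lemma eventually_at_right_0_affine_le:
  fixes a b c d :: real
  assumes "a < b"
  shows "eventually (\<lambda>t. a + t * c \<le> b + t * d) (at_right 0)"
proof -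
  have "((\<lambda>t::real. a + t * (c - d)) \<longlongrightarrow> a) (at_right 0)"
    by (auto intro!: tendsto_eq_intros)
  then have "eventually (\<lambda>t. a + t * (c - d) < b) (at_right 0)"
    using assms by (rule order_tendstoD(2))
  then show ?thesis
    by (rule eventually_mono) (simp add: algebra_simps)
qed

lemma edge_osc_directional_bound:
  assumes "e \<noteq> {}"
  shows "\<exists>q\<in>edge_argmax e p.
    eventually (\<lambda>t. edge_osc e (p + t *\<^sub>R v) \<le> edge_osc e p + t * (q \<bullet> v)) (at_right 0)"
proof -
  define P where "P = {q \<in> edge_diffs e. q \<bullet> p = edge_osc e p}"
  have "finite P"
    unfolding P_def by (rule finite_subset[OF _ finite_edge_diffs]) auto
  moreover have "P \<noteq> {}"
    unfolding P_def using edge_osc_attained[OF assms, of p] by auto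
  ultimately obtain q where "is_arg_min (\<lambda>q. - (q \<bullet> v)) (\<lambda>q. q \<in> P) q"
    using ex_is_arg_min_if_finite by blast
  then have q: "q \<in> P" "\<And>r. r \<in> P \<Longrightarrow> r \<bullet> v \<le> q \<bullet> v"
    by (auto simp: is_arg_min_linorder)
  text \<open>Maximisers of \<open>p\<close> are dominated by \<open>q\<close> in direction \<open>v\<close>; all other
    differences stay strictly below the maximum for small \<open>t\<close>.\<close>
  have "eventually (\<lambda>t. r \<bullet> (p + t *\<^sub>R v) \<le> edge_osc e p + t * (q \<bullet> v)) (at_right 0)"
    if r: "r \<in> edge_diffs e" for r
  proof (cases "r \<in> P")
    case True
    show ?thesis
      using eventually_at_right_less
    proof (rule eventually_mono)
      fix t :: real assume "0 < t"
      then show "r \<bullet> (p + t *\<^sub>R v) \<le> edge_osc e p + t * (q \<bullet> v)"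
        using True q(2)[OF True] unfolding P_def by (simp add: inner_add_right mult_left_mono)
    qed
  next
    case False
    then have "r \<bullet> p < edge_osc e p"
      using edge_diffs_inner_le_edge_osc[OF r, of p] r unfolding P_def by simp
    from eventually_at_right_0_affine_le[OF this, of "r \<bullet> v" "q \<bullet> v"] show ?thesis
      by (rule eventually_mono) (simp add: inner_add_right)
  qed
  then have "eventually (\<lambda>t. \<forall>r\<in>edge_diffs e. r \<bullet> (p + t *\<^sub>R v) \<le> edge_osc e p + t * (q \<bullet> v)) (at_right 0)"
    by (intro eventually_ball_finite finite_edge_diffs) auto
  then have "eventually (\<lambda>t. edge_osc e (p + t *\<^sub>R v) \<le> edge_osc e p + t * (q \<bullet> v)) (at_right 0)"
    by (rule eventually_mono) (simp add: edge_osc_le_iff[OF assms])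
  moreover have "q \<in> edge_argmax e p"
    using q(1) edge_diffs_subset_Bset unfolding P_def edge_argmax_def by blast
  ultimately show ?thesis by blast
qed

locale hgraph =
  fixes E :: "'v::finite set set" and w :: "'v set \<Rightarrow> real"
  assumes edges_nonempty: "\<And>e. e \<in> E \<Longrightarrow> e \<noteq> {}"
    and weights_pos: "\<And>e. e \<in> E \<Longrightarrow> 0 < w e"
begin

lemma weights_nonneg: "e \<in> E \<Longrightarrow> 0 \<le> w e"
  using weights_pos less_imp_le by blast

lemma hLap_eq_weighted_set_sum: "hLap E w p = weighted_set_sum E (\<lambda>e. w e * edge_osc e p) (\<lambda>e. edge_argmax e p)"
proof -
  have argmax: "(\<forall>e\<in>E. b e \<in> Bset e \<and> (\<forall>c\<in>Bset e. c \<bullet> p \<le> b e \<bullet> p))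
      \<longleftrightarrow> (\<forall>e\<in>E. b e \<in> edge_argmax e p)" for b
    by (rule ball_cong[OF refl]) (simp add: Bset_argmax_iff edges_nonempty)
  have "(\<Sum>e\<in>E. (w e * (b e \<bullet> p)) *\<^sub>R b e) = (\<Sum>e\<in>E. (w e * edge_osc e p) *\<^sub>R b e)"
    if "\<forall>e\<in>E. b e \<in> edge_argmax e p" for b
    using that by (intro sum.cong) (auto simp: edge_argmax_def)
  then show ?thesis
    unfolding hLap_def weighted_set_sum_def using argmax by (intro Collect_cong ex_cong1) auto
qed

lemma closed_hLap: "closed (hLap E w p)"
  and convex_hLap: "convex (hLap E w p)"
  using compact_convex_weighted_set_sum[of E "\<lambda>e. edge_argmax e p" "\<lambda>e. w e * edge_osc e p"]
  by (auto simp: hLap_eq_weighted_set_sum compact_edge_argmax convex_edge_argmax compact_imp_closed)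

lemma hLap_add_const: "hLap E w (p + (\<chi> z. c)) = hLap E w p"
  by (simp add: hLap_eq_weighted_set_sum edge_osc_add_const edge_argmax_add_const)

lemma hLap_scaleR:
  assumes "0 < c" "u \<in> hLap E w p"
  shows "c *\<^sub>R u \<in> hLap E w (c *\<^sub>R p)"
proof -
  obtain b where b: "\<forall>e\<in>E. b e \<in> Bset e \<and> (\<forall>c\<in>Bset e. c \<bullet> p \<le> b e \<bullet> p)"
    "u = (\<Sum>e\<in>E. (w e * (b e \<bullet> p)) *\<^sub>R b e)"
    using assms(2) unfolding hLap_def by blast
  have "\<forall>e\<in>E. b e \<in> Bset e \<and> (\<forall>c'\<in>Bset e. c' \<bullet> (c *\<^sub>R p) \<le> b e \<bullet> (c *\<^sub>R p))"
    using b(1) assms(1) by (simp add: mult_left_mono)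
  moreover have "c *\<^sub>R u = (\<Sum>e\<in>E. (w e * (b e \<bullet> (c *\<^sub>R p))) *\<^sub>R b e)"
    unfolding b(2) scaleR_sum_right by (intro sum.cong refl) (simp add: algebra_simps)
  ultimately show ?thesis unfolding hLap_def by blast
qed

lemma hLap_uminus:
  assumes "u \<in> hLap E w p"
  shows "- u \<in> hLap E w (- p)"
proof -
  obtain b where b: "\<forall>e\<in>E. b e \<in> Bset e \<and> (\<forall>c\<in>Bset e. c \<bullet> p \<le> b e \<bullet> p)"
    "u = (\<Sum>e\<in>E. (w e * (b e \<bullet> p)) *\<^sub>R b e)"
    using assms unfolding hLap_def by blast
  have "\<forall>e\<in>E. - b e \<in> Bset e \<and> (\<forall>c\<in>Bset e. c \<bullet> (- p) \<le> - b e \<bullet> (- p))"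
  proof (intro ballI conjI)
    fix e c assume "e \<in> E" "c \<in> Bset e"
    then have "(- c) \<bullet> p \<le> b e \<bullet> p"
      using b(1) uminus_Bset by blast
    then show "c \<bullet> (- p) \<le> - b e \<bullet> (- p)" by simp
  qed (use b(1) uminus_Bset in blast)
  moreover have "- u = (\<Sum>e\<in>E. (w e * (- b e \<bullet> (- p))) *\<^sub>R - b e)"
    unfolding b(2) by (simp add: sum_negf)
  ultimately show ?thesis
    unfolding hLap_def by (intro CollectI exI[of _ "\<lambda>e. - b e"]) simp
qed

lemma hLap_inner:
  assumes "u \<in> hLap E w p"
  shows "u \<bullet> p = (\<Sum>e\<in>E. w e * (edge_osc e p)\<^sup>2)"
    and "u \<bullet> q \<le> (\<Sum>e\<in>E. w e * edge_osc e p * edge_osc e q)"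
proof -
  obtain b where b: "\<forall>e\<in>E. b e \<in> edge_argmax e p" "u = (\<Sum>e\<in>E. (w e * edge_osc e p) *\<^sub>R b e)"
    using assms unfolding hLap_eq_weighted_set_sum weighted_set_sum_def by blast
  show "u \<bullet> p = (\<Sum>e\<in>E. w e * (edge_osc e p)\<^sup>2)"
    unfolding b(2) inner_sum_left using b(1)
    by (intro sum.cong) (auto simp: edge_argmax_def power2_eq_square)
  have "0 \<le> w e * edge_osc e p" if "e \<in> E" for e
    using that by (intro mult_nonneg_nonneg weights_nonneg edge_osc_nonneg edges_nonempty)
  moreover have "b e \<bullet> q \<le> edge_osc e q" if "e \<in> E" for e
    using that b(1) by (auto simp: edge_argmax_def intro: inner_le_edge_osc)
  ultimately show "u \<bullet> q \<le> (\<Sum>e\<in>E. w e * edge_osc e p * edge_osc e q)"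
    unfolding b(2) inner_sum_left by (auto intro!: sum_mono mult_left_mono)
qed

lemma hLap_inner_self_nonneg: "u \<in> hLap E w p \<Longrightarrow> 0 \<le> u \<bullet> p"
  by (auto simp: hLap_inner(1) intro!: sum_nonneg mult_nonneg_nonneg weights_nonneg)

lemma hLap_monotone:
  assumes "u1 \<in> hLap E w p1" "u2 \<in> hLap E w p2"
  shows "0 \<le> (u1 - u2) \<bullet> (p1 - p2)"
proof -
  have "0 \<le> (\<Sum>e\<in>E. w e * (edge_osc e p1 - edge_osc e p2)\<^sup>2)"
    by (intro sum_nonneg mult_nonneg_nonneg weights_nonneg) auto
  also have "\<dots> = (\<Sum>e\<in>E. w e * (edge_osc e p1)\<^sup>2) + (\<Sum>e\<in>E. w e * (edge_osc e p2)\<^sup>2)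
      - (\<Sum>e\<in>E. w e * edge_osc e p1 * edge_osc e p2) - (\<Sum>e\<in>E. w e * edge_osc e p2 * edge_osc e p1)"
    by (simp add: sum_subtractf sum.distrib sum_distrib_left power2_eq_square algebra_simps)
  also have "\<dots> \<le> u1 \<bullet> p1 + u2 \<bullet> p2 - u1 \<bullet> p2 - u2 \<bullet> p1"
    using hLap_inner(1)[OF assms(1)] hLap_inner(2)[OF assms(1), of p2]
      hLap_inner(1)[OF assms(2)] hLap_inner(2)[OF assms(2), of p1]
    by linarith
  also have "\<dots> = (u1 - u2) \<bullet> (p1 - p2)"
    by (simp add: inner_diff_left inner_diff_right)
  finally show ?thesis .
qed

lemma lap_energy_nonneg: "0 \<le> lap_energy E w p"
  unfolding lap_energy_def by (auto intro!: sum_nonneg mult_nonneg_nonneg weights_nonneg)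

lemma lap_energy_directional_bound:
  "\<exists>s\<in>hLap E w p. \<exists>K. eventually
     (\<lambda>t. lap_energy E w (p + t *\<^sub>R v) \<le> lap_energy E w p + t * (s \<bullet> v) + t\<^sup>2 * K) (at_right 0)"
proof -
  have "\<exists>q. q \<in> edge_argmax e p \<and>
     eventually (\<lambda>t. edge_osc e (p + t *\<^sub>R v) \<le> edge_osc e p + t * (q \<bullet> v)) (at_right 0)"
    if "e \<in> E" for e
    using edge_osc_directional_bound[OF edges_nonempty[OF that]] by blast
  then obtain q where q: "\<forall>e\<in>E. q e \<in> edge_argmax e p \<and>
     eventually (\<lambda>t. edge_osc e (p + t *\<^sub>R v) \<le> edge_osc e p + t * (q e \<bullet> v)) (at_right 0)"
    by metis
  define s where "s = (\<Sum>e\<in>E. (w e * edge_osc e p) *\<^sub>R q e)"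
  define K where "K = (\<Sum>e\<in>E. w e * (q e \<bullet> v)\<^sup>2 / 2)"
  have "s \<in> hLap E w p"
    unfolding hLap_eq_weighted_set_sum weighted_set_sum_def s_def using q by blast
  moreover have "eventually (\<lambda>t. \<forall>e\<in>E. edge_osc e (p + t *\<^sub>R v) \<le> edge_osc e p + t * (q e \<bullet> v)) (at_right 0)"
    using q by (intro eventually_ball_finite) auto
  then have "eventually (\<lambda>t. lap_energy E w (p + t *\<^sub>R v) \<le> lap_energy E w p + t * (s \<bullet> v) + t\<^sup>2 * K) (at_right 0)"
  proof (rule eventually_mono)
    fix t assume le: "\<forall>e\<in>E. edge_osc e (p + t *\<^sub>R v) \<le> edge_osc e p + t * (q e \<bullet> v)"
    have "w e * (edge_osc e (p + t *\<^sub>R v))\<^sup>2 / 2 \<le> w e * (edge_osc e p + t * (q e \<bullet> v))\<^sup>2 / 2"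
      if "e \<in> E" for e
      using that le
      by (intro divide_right_mono mult_left_mono power_mono)
        (auto simp: edge_osc_nonneg edges_nonempty weights_nonneg)
    then have "lap_energy E w (p + t *\<^sub>R v) \<le> (\<Sum>e\<in>E. w e * (edge_osc e p + t * (q e \<bullet> v))\<^sup>2 / 2)"
      unfolding lap_energy_def by (rule sum_mono)
    also have "\<dots> = lap_energy E w p + t * (s \<bullet> v) + t\<^sup>2 * K"
      unfolding lap_energy_def s_def K_def inner_sum_left
      by (simp add: sum.distrib sum_distrib_left power2_eq_square algebra_simps add_divide_distrib)
    finally show "lap_energy E w (p + t *\<^sub>R v) \<le> lap_energy E w p + t * (s \<bullet> v) + t\<^sup>2 * K" .
  qed
  ultimately show ?thesis by blast
qed

lemma hLap_nonempty: "hLap E w p \<noteq> {}"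
  using lap_energy_directional_bound[of p 0] by blast

text \<open>If \<open>r \<notin> hLap E w p\<close>, a hyperplane separating \<open>r\<close> from this closed convex set gives a
  direction along which the energy decreases faster than the hypothesis allows.\<close>
lemma hLap_contains_subgradient:
  assumes sub: "\<And>v. \<exists>K. \<forall>t>0. t * (r \<bullet> v) \<le> lap_energy E w (p + t *\<^sub>R v) - lap_energy E w p + t\<^sup>2 * K"
  shows "r \<in> hLap E w p"
proof (rule ccontr)
  assume "r \<notin> hLap E w p"
  then obtain a c where ac: "a \<bullet> r < c" "\<forall>x\<in>hLap E w p. c < a \<bullet> x"
    using separating_hyperplane_closed_point[OF convex_hLap closed_hLap] by blast
  obtain s K where sK: "s \<in> hLap E w p"
    "eventually (\<lambda>t. lap_energy E w (p - t *\<^sub>R a) \<le> lap_energy E w p + t * (s \<bullet> - a) + t\<^sup>2 * K) (at_right 0)"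
    using lap_energy_directional_bound[of p "- a"] by auto
  obtain K' where K': "\<forall>t>0. t * (r \<bullet> - a) \<le> lap_energy E w (p - t *\<^sub>R a) - lap_energy E w p + t\<^sup>2 * K'"
    using sub[of "- a"] by auto
  define \<delta> where "\<delta> = a \<bullet> s - a \<bullet> r"
  have "\<delta> > 0" unfolding \<delta>_def using ac sK(1) by (auto simp: inner_commute)
  have "((\<lambda>t::real. t * (K + K')) \<longlongrightarrow> 0) (at_right 0)"
    by (auto intro!: tendsto_eq_intros)
  then have "eventually (\<lambda>t::real. t * (K + K') < \<delta>) (at_right 0)"
    using \<open>\<delta> > 0\<close> by (rule order_tendstoD(2))
  then have "eventually (\<lambda>t::real. False) (at_right 0)"
    using sK(2) eventually_at_right_less
  proof (eventually_elim)
    case (elim t)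
    then have "t * (r \<bullet> - a) \<le> t * (s \<bullet> - a) + t\<^sup>2 * (K + K')"
      using K'[rule_format, of t] by (simp add: distrib_left)
    then have "t * \<delta> \<le> t * (t * (K + K'))"
      unfolding \<delta>_def by (simp add: power2_eq_square algebra_simps inner_commute)
    with elim show False by (simp add: mult_le_cancel_left)
  qed
  then show False by simp
qed

end

lemma continuous_attains_global_min:
  fixes F :: "'a::heine_borel \<Rightarrow> real"
  assumes "continuous_on UNIV F" "bounded {p. F p \<le> F a}"
  obtains p0 where "\<And>p. F p0 \<le> F p"
proof -
  let ?S = "{p. F p \<le> F a}"
  have "compact ?S"
    using assms closed_Collect_le[OF assms(1) continuous_on_const] by (simp add: compact_eq_bounded_closed)
  then obtain p0 where "p0 \<in> ?S" "\<forall>p\<in>?S. F p0 \<le> F p"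
    using continuous_attains_inf[OF _ _ continuous_on_subset[OF assms(1)]] by blast
  then have "F p0 \<le> F p" for p
    by (cases "p \<in> ?S") auto
  then show thesis by (rule that)
qed

lemma abs_le_one_plus_square: "\<bar>a::real\<bar> \<le> 1 + a\<^sup>2"
proof (cases "\<bar>a\<bar> \<le> 1")
  case False
  then have "\<bar>a\<bar> * 1 \<le> \<bar>a\<bar> * \<bar>a\<bar>" by (intro mult_left_mono) auto
  then show ?thesis by (simp add: power2_eq_square)
qed (simp add: add_increasing2)

lemma wip_commute: "wip E w f g = wip E w g f"
  unfolding wip_def by (simp add: mult.commute)

lemma wip_eq_inner_Dinv: "wip E w f g = f \<bullet> Dinv E w g"
  unfolding wip_def inner_vec_def Dinv_def by simp

lemma Dinv_add: "Dinv E w (f + g) = Dinv E w f + Dinv E w g"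
  and Dinv_diff: "Dinv E w (f - g) = Dinv E w f - Dinv E w g"
  and Dinv_uminus: "Dinv E w (- f) = - Dinv E w f"
  unfolding Dinv_def by (simp_all add: vec_eq_iff add_divide_distrib diff_divide_distrib)

lemma wip_delta_diff: "wip E w g (delta x - delta y) = g$x / hdeg E w x - g$y / hdeg E w y"
  by (subst wip_commute) (simp add: wip_eq_inner_Dinv inner_diff_left Dinv_def)

text \<open>The objective \<open>\<parallel>f - g\<parallel>\<^sup>2/(2\<lambda>) + Q(D\<^sup>-\<^sup>1 g)\<close> of the resolvent, in the variable
  \<open>p = D\<^sup>-\<^sup>1 g\<close>.\<close>
definition resolvent_energy :: "'v::finite set set \<Rightarrow> ('v set \<Rightarrow> real) \<Rightarrow> real \<Rightarrow> real^'v \<Rightarrow> real^'v \<Rightarrow> real" where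
  "resolvent_energy E w lam f p =
     (\<Sum>z\<in>UNIV. (f$z - hdeg E w z * p$z)\<^sup>2 / (2 * lam * hdeg E w z)) + lap_energy E w p"

locale hgraph_resolvent = hgraph E w for E :: "'v::finite set set" and w +
  fixes lam :: real
  assumes degree_pos: "\<And>x. 0 < hdeg E w x"
    and lam_pos: "0 < lam"
begin

lemma degree_nonzero: "hdeg E w x \<noteq> 0"
  using degree_pos by (metis less_irrefl)

lemma wip_self_nonneg: "0 \<le> wip E w g g"
  unfolding wip_def using degree_pos by (intro sum_nonneg) (simp add: less_imp_le)

lemma wip_self_eq_0_iff: "wip E w g g = 0 \<longleftrightarrow> g = 0"
proof
  assume "wip E w g g = 0"
  then have "\<forall>z\<in>UNIV. g$z * g$z / hdeg E w z = 0"
    unfolding wip_def using degree_pos by (subst sum_nonneg_eq_0_iff[symmetric]) (auto simp: less_imp_le)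
  then show "g = 0"
    using degree_nonzero by (simp add: vec_eq_iff)
qed (simp add: wip_def)

lemma bounded_resolvent_energy_sublevel: "bounded {p. resolvent_energy E w lam f p \<le> c}"
proof -
  let ?d = "hdeg E w"
  define B where "B z = (\<bar>f$z\<bar> + 1 + 2 * lam * ?d z * c) / ?d z" for z
  have "\<bar>p$z\<bar> \<le> B z" if p: "resolvent_energy E w lam f p \<le> c" for p z
  proof -
    have "(f$z - ?d z * p$z)\<^sup>2 / (2 * lam * ?d z) \<le> (\<Sum>z\<in>UNIV. (f$z - ?d z * p$z)\<^sup>2 / (2 * lam * ?d z))"
      using degree_pos lam_pos by (intro member_le_sum divide_nonneg_nonneg) (auto simp: less_imp_le)
    then have "(f$z - ?d z * p$z)\<^sup>2 / (2 * lam * ?d z) \<le> c"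
      using p lap_energy_nonneg[of p] unfolding resolvent_energy_def by linarith
    then have "(f$z - ?d z * p$z)\<^sup>2 \<le> 2 * lam * ?d z * c"
      using degree_pos[of z] lam_pos by (simp add: divide_le_eq mult.commute)
    then have "\<bar>?d z * p$z\<bar> \<le> \<bar>f$z\<bar> + 1 + 2 * lam * ?d z * c"
      using abs_le_one_plus_square[of "f$z - ?d z * p$z"] by linarith
    then show ?thesis
      unfolding B_def using degree_pos[of z] by (simp add: le_divide_eq abs_mult mult.commute)
  qed
  then have "norm p \<le> (\<Sum>z\<in>UNIV. B z)" if "resolvent_energy E w lam f p \<le> c" for p
    using that by (intro order.trans[OF norm_le_l1_cart sum_mono])
  then show ?thesis
    unfolding bounded_iff by blast
qed

lemma resolvent_energy_along_line:
  "resolvent_energy E w lam f (p + t *\<^sub>R v) =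
     resolvent_energy E w lam f p - t * ((\<chi> z. (f$z - hdeg E w z * p$z) / lam) \<bullet> v)
     + t\<^sup>2 * (\<Sum>z\<in>UNIV. hdeg E w z * (v$z)\<^sup>2 / (2 * lam))
     + (lap_energy E w (p + t *\<^sub>R v) - lap_energy E w p)"
proof -
  let ?d = "hdeg E w"
  have "(f$z - ?d z * (p + t *\<^sub>R v)$z)\<^sup>2 / (2 * lam * ?d z) =
      (f$z - ?d z * p$z)\<^sup>2 / (2 * lam * ?d z) - t * ((f$z - ?d z * p$z) / lam * v$z)
      + t\<^sup>2 * (?d z * (v$z)\<^sup>2 / (2 * lam))" for z
    using degree_nonzero[of z] lam_pos by (simp add: field_simps power2_eq_square)
  then show ?thesis
    unfolding resolvent_energy_def inner_vec_def
    by (simp add: sum.distrib sum_subtractf sum_distrib_left)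
qed

text \<open>Comparing the minimiser \<open>p\<^sub>0\<close> of the resolvent energy with \<open>p\<^sub>0 + t v\<close> shows that
  \<open>(f - D p\<^sub>0) / \<lambda>\<close> is a subgradient of \<open>Q\<close> at \<open>p\<^sub>0\<close>; so \<open>g = D p\<^sub>0\<close> solves the equation.\<close>
lemma resolvent_equation_solvable: "\<exists>g. \<exists>u\<in>hLap E w (Dinv E w g). f = g + lam *\<^sub>R u"
proof -
  let ?F = "resolvent_energy E w lam f" and ?d = "hdeg E w"
  have "continuous_on UNIV ?F"
    unfolding resolvent_energy_def lap_energy_def using degree_nonzero lam_pos
    by (intro continuous_intros) auto
  then obtain p0 where min: "\<And>p. ?F p0 \<le> ?F p"
    using continuous_attains_global_min bounded_resolvent_energy_sublevel by blast
  define r where "r = (\<chi> z. (f$z - ?d z * p0$z) / lam)"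
  have "r \<in> hLap E w p0"
  proof (rule hLap_contains_subgradient)
    fix v
    define K where "K = (\<Sum>z\<in>UNIV. ?d z * (v$z)\<^sup>2 / (2 * lam))"
    have "t * (r \<bullet> v) \<le> lap_energy E w (p0 + t *\<^sub>R v) - lap_energy E w p0 + t\<^sup>2 * K" for t
      using min[of "p0 + t *\<^sub>R v"] unfolding resolvent_energy_along_line r_def K_def by linarith
    then show "\<exists>K. \<forall>t>0. t * (r \<bullet> v) \<le> lap_energy E w (p0 + t *\<^sub>R v) - lap_energy E w p0 + t\<^sup>2 * K"
      by blast
  qed
  moreover have "Dinv E w (\<chi> z. ?d z * p0$z) = p0"
    unfolding Dinv_def using degree_nonzero by (simp add: vec_eq_iff)
  moreover have "f = (\<chi> z. ?d z * p0$z) + lam *\<^sub>R r"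
    unfolding r_def using lam_pos by (simp add: vec_eq_iff)
  ultimately show ?thesis
    by (intro exI[of _ "\<chi> z. ?d z * p0$z"] bexI[of _ r]) simp_all
qed

lemma resolvent_solution_unique:
  assumes "u1 \<in> hLap E w (Dinv E w g1)" "u2 \<in> hLap E w (Dinv E w g2)"
    and "g1 + lam *\<^sub>R u1 = g2 + lam *\<^sub>R u2"
  shows "g1 = g2"
proof -
  have diff: "g1 - g2 = lam *\<^sub>R (u2 - u1)"
    using assms(3) by (simp add: algebra_simps)
  have "wip E w (g1 - g2) (g1 - g2) = (g1 - g2) \<bullet> (Dinv E w g1 - Dinv E w g2)"
    by (simp add: wip_eq_inner_Dinv Dinv_diff)
  also have "\<dots> = lam * ((u2 - u1) \<bullet> (Dinv E w g1 - Dinv E w g2))"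
    by (simp only: diff inner_scaleR_left)
  also have "\<dots> = - lam * ((u2 - u1) \<bullet> (Dinv E w g2 - Dinv E w g1))"
    by (simp add: inner_diff_right algebra_simps)
  also have "\<dots> \<le> 0"
    using hLap_monotone[OF assms(2,1)] lam_pos by simp
  finally show ?thesis
    using wip_self_nonneg[of "g1 - g2"] wip_self_eq_0_iff[of "g1 - g2"] by simp
qed

lemma resolvent_eqI:
  assumes "u \<in> hLap E w (Dinv E w g)" "f = g + lam *\<^sub>R u"
  shows "resolvent E w lam f = g"
  unfolding resolvent_def nLap_def
proof (rule the_equality)
  show "f \<in> (\<lambda>u. g + lam *\<^sub>R u) ` hLap E w (Dinv E w g)"
    using assms by blast
next
  fix g' assume "f \<in> (\<lambda>u. g' + lam *\<^sub>R u) ` hLap E w (Dinv E w g')"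
  then show "g' = g"
    using resolvent_solution_unique assms by blast
qed

lemma resolvent_equation: "\<exists>u\<in>hLap E w (Dinv E w (resolvent E w lam f)). f = resolvent E w lam f + lam *\<^sub>R u"
proof -
  obtain g u where "u \<in> hLap E w (Dinv E w g)" "f = g + lam *\<^sub>R u"
    using resolvent_equation_solvable[of f] by blast
  moreover from this have "resolvent E w lam f = g"
    by (rule resolvent_eqI)
  ultimately show ?thesis by auto
qed

lemma resolvent_uminus: "resolvent E w lam (- f) = - resolvent E w lam f"
proof -
  obtain u where u: "u \<in> hLap E w (Dinv E w (resolvent E w lam f))" "f = resolvent E w lam f + lam *\<^sub>R u"
    using resolvent_equation by blast
  have "- f = - resolvent E w lam f + lam *\<^sub>R (- u)"
    using arg_cong[OF u(2), of uminus] by simp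
  then show ?thesis
    using hLap_uminus[OF u(1)] by (intro resolvent_eqI[of "- u"]) (simp_all add: Dinv_uminus)
qed

lemma resolvent_add_degree:
  "resolvent E w lam (f + (\<chi> z. c * hdeg E w z)) = resolvent E w lam f + (\<chi> z. c * hdeg E w z)"
proof -
  obtain u where u: "u \<in> hLap E w (Dinv E w (resolvent E w lam f))" "f = resolvent E w lam f + lam *\<^sub>R u"
    using resolvent_equation by blast
  have "Dinv E w (\<chi> z. c * hdeg E w z) = (\<chi> z. c)"
    unfolding Dinv_def using degree_nonzero by (simp add: vec_eq_iff)
  then show ?thesis
    using u by (intro resolvent_eqI[of u]) (simp_all add: Dinv_add hLap_add_const)
qed

lemma wip_self_resolvent_le: "wip E w (resolvent E w lam f) (resolvent E w lam f) \<le> wip E w f f"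
proof -
  define g where "g = resolvent E w lam f"
  obtain u where u: "u \<in> hLap E w (Dinv E w g)" "f = g + lam *\<^sub>R u"
    using resolvent_equation unfolding g_def by blast
  have "wip E w g g \<le> wip E w g g + lam * (u \<bullet> Dinv E w g)"
    using hLap_inner_self_nonneg[OF u(1)] lam_pos by simp
  also have "\<dots> = wip E w f g"
    unfolding u(2) wip_eq_inner_Dinv by (simp add: inner_add_left)
  finally have "wip E w g g \<le> wip E w f g" .
  moreover have "0 \<le> wip E w (f - g) (f - g)"
    by (rule wip_self_nonneg)
  then have "2 * wip E w f g \<le> wip E w f f + wip E w g g"
    using wip_commute[of E w f g]
    by (simp add: wip_eq_inner_Dinv Dinv_diff inner_diff_left inner_diff_right)
  ultimately show ?thesis
    unfolding g_def by linarith
qed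

end

lemma hdist_ge_1:
  assumes "hconnected E" "a \<noteq> b"
  shows "1 \<le> hdist E a b"
proof -
  obtain n where "(a, b) \<in> {(a, b). hadj E a b} ^^ n"
    using assms(1) rtrancl_power unfolding hconnected_def by blast
  then have "(a, b) \<in> {(a, b). hadj E a b} ^^ hdist E a b"
    unfolding hdist_def by (rule LeastI)
  then show ?thesis
    using assms(2) by (cases "hdist E a b") auto
qed

lemma wLip1_if_bounded:
  assumes "hconnected E" "\<And>z. \<bar>f$z / hdeg E w z\<bar> \<le> 1/2"
  shows "f \<in> wLip1 E w"
  unfolding wLip1_def
proof (intro CollectI allI)
  fix a b
  show "\<bar>f$a / hdeg E w a - f$b / hdeg E w b\<bar> \<le> real (hdist E a b)"
  proof (cases "a = b")
    case False
    have "\<bar>f$a / hdeg E w a - f$b / hdeg E w b\<bar> \<le> 1"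
      using abs_triangle_ineq4[of "f$a / hdeg E w a" "f$b / hdeg E w b"] assms(2)[of a] assms(2)[of b]
      by linarith
    then show ?thesis
      using hdist_ge_1[OF assms(1) False] by linarith
  qed simp
qed

lemma zero_in_wLip1: "0 \<in> wLip1 E w"
  unfolding wLip1_def by simp

lemma uminus_wLip1: "f \<in> wLip1 E w \<Longrightarrow> - f \<in> wLip1 E w"
  unfolding wLip1_def by (simp add: abs_minus_commute)

lemma image_diff_commute:
  fixes \<phi> :: "'f \<Rightarrow> 'a \<Rightarrow> real"
  assumes "\<iota> ` L \<subseteq> L" "\<forall>f a. \<phi> (\<iota> f) a = - \<phi> f a"
  shows "(\<lambda>f. \<phi> f a - \<phi> f b) ` L = (\<lambda>f. \<phi> f b - \<phi> f a) ` L"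
proof -
  have "(\<lambda>f. \<phi> f a - \<phi> f b) ` L \<subseteq> (\<lambda>f. \<phi> f b - \<phi> f a) ` L" for a b
  proof
    fix t assume "t \<in> (\<lambda>f. \<phi> f a - \<phi> f b) ` L"
    then obtain f where "f \<in> L" "t = \<phi> f a - \<phi> f b" by blast
    then have "\<iota> f \<in> L" "t = \<phi> (\<iota> f) b - \<phi> (\<iota> f) a"
      using assms by auto
    then show "t \<in> (\<lambda>f. \<phi> f b - \<phi> f a) ` L" by blast
  qed
  then show ?thesis by blast
qed

lemma SUP_diff_metric:
  fixes \<phi> :: "'f \<Rightarrow> 'a \<Rightarrow> real" and \<iota> :: "'f \<Rightarrow> 'f"
  assumes "L \<noteq> {}" and \<iota>: "\<iota> ` L \<subseteq> L" "\<forall>f a. \<phi> (\<iota> f) a = - \<phi> f a"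
    and bdd: "\<forall>a b. \<exists>C. \<forall>f\<in>L. \<phi> f a - \<phi> f b \<le> C"
    and sep: "\<forall>a b. a \<noteq> b \<longrightarrow> (\<exists>f\<in>L. 0 < \<phi> f a - \<phi> f b)"
  defines "D a b \<equiv> SUP f\<in>L. \<phi> f a - \<phi> f b"
  shows "\<forall>a b c. (D a b = 0 \<longleftrightarrow> a = b) \<and> D a b = D b a \<and> D a c \<le> D a b + D b c"
proof (intro allI conjI)
  fix a b c
  have upper: "\<phi> f a - \<phi> f b \<le> D a b" if "f \<in> L" for f a b
  proof -
    obtain C where "\<forall>f\<in>L. \<phi> f a - \<phi> f b \<le> C"
      using bdd by blast
    then have "bdd_above ((\<lambda>f. \<phi> f a - \<phi> f b) ` L)"
      by (intro bdd_aboveI2) blast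
    then show ?thesis
      unfolding D_def by (rule cSUP_upper[OF that])
  qed
  show "D a b = 0 \<longleftrightarrow> a = b"
  proof
    assume "D a b = 0"
    show "a = b"
    proof (rule ccontr)
      assume "a \<noteq> b"
      then obtain f where "f \<in> L" "0 < \<phi> f a - \<phi> f b"
        using sep by blast
      then show False
        using upper[of f a b] \<open>D a b = 0\<close> by linarith
    qed
  qed (simp add: D_def \<open>L \<noteq> {}\<close>)
  show "D a b = D b a"
    unfolding D_def image_diff_commute[OF \<iota>] ..
  show "D a c \<le> D a b + D b c"
    unfolding D_def[of a c]
  proof (rule cSUP_least[OF \<open>L \<noteq> {}\<close>])
    fix f assume "f \<in> L"
    then show "\<phi> f a - \<phi> f c \<le> D a b + D b c"
      using upper[of f a b] upper[of f b c] by linarith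
  qed
qed

context hgraph_resolvent
begin

lemma wLip1_add_degree: "f \<in> wLip1 E w \<Longrightarrow> f + (\<chi> z. c * hdeg E w z) \<in> wLip1 E w"
  unfolding wLip1_def using degree_nonzero by (simp add: add_divide_distrib)

lemma abs_value_le_wip_self: "\<bar>g$a / hdeg E w a\<bar> \<le> 1 + wip E w g g / hdeg E w a"
proof -
  let ?d = "hdeg E w"
  have "(g$a)\<^sup>2 / ?d a \<le> wip E w g g"
    unfolding wip_def power2_eq_square using degree_pos
    by (intro member_le_sum divide_nonneg_nonneg) (auto simp: less_imp_le)
  then have "(g$a)\<^sup>2 / ?d a / ?d a \<le> wip E w g g / ?d a"
    using degree_pos[of a] by (intro divide_right_mono) auto
  then have "(g$a / ?d a)\<^sup>2 \<le> wip E w g g / ?d a"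
    by (simp add: power_divide power2_eq_square)
  then show ?thesis
    using abs_le_one_plus_square[of "g$a / ?d a"] by linarith
qed

lemma wip_self_le_of_wLip1:
  assumes "f \<in> wLip1 E w" "f$x = 0" "\<And>a b. hdist E a b \<le> M"
  shows "wip E w f f \<le> (\<Sum>z\<in>UNIV. hdeg E w z * (real M)\<^sup>2)"
  unfolding wip_def
proof (rule sum_mono)
  fix z
  let ?d = "hdeg E w"
  have "\<bar>f$z / ?d z\<bar> = \<bar>f$z / ?d z - f$x / ?d x\<bar>"
    using assms(2) by simp
  also have "\<dots> \<le> real (hdist E z x)"
    using assms(1) unfolding wLip1_def by blast
  also have "\<dots> \<le> real M"
    using assms(3) by simp
  finally have "(f$z / ?d z)\<^sup>2 \<le> (real M)\<^sup>2"
    by (metis abs_ge_zero power2_abs power_mono)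
  then have "?d z * (f$z / ?d z)\<^sup>2 \<le> ?d z * (real M)\<^sup>2"
    using degree_pos[of z] by simp
  then show "f$z * f$z / ?d z \<le> ?d z * (real M)\<^sup>2"
    using degree_nonzero[of z] by (simp add: power2_eq_square)
qed

lemma resolvent_value_diff_bounded:
  "\<exists>C. \<forall>f\<in>wLip1 E w. resolvent E w lam f $ x / hdeg E w x - resolvent E w lam f $ y / hdeg E w y \<le> C"
proof -
  let ?d = "hdeg E w" and ?J = "resolvent E w lam"
  define M where "M = Max (range (\<lambda>(a, b). hdist E a b))"
  have M: "hdist E a b \<le> M" for a b
    unfolding M_def by (rule Max_ge) auto
  define K where "K = (\<Sum>z\<in>UNIV. ?d z * (real M)\<^sup>2)"
  have "?J f $ x / ?d x - ?J f $ y / ?d y \<le> 2 + K / ?d x + K / ?d y" if f: "f \<in> wLip1 E w" for f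
  proof -
    define c where "c = f$x / ?d x"
    define f' where "f' = f + (\<chi> z. - c * ?d z)"
    have "f = f' + (\<chi> z. c * ?d z)"
      unfolding f'_def by (simp add: vec_eq_iff)
    then have "?J f = ?J f' + (\<chi> z. c * ?d z)"
      using resolvent_add_degree by presburger
    then have val: "?J f $ x / ?d x - ?J f $ y / ?d y = ?J f' $ x / ?d x - ?J f' $ y / ?d y"
      using degree_nonzero by (simp add: add_divide_distrib)
    moreover have "f' \<in> wLip1 E w"
      unfolding f'_def using f by (rule wLip1_add_degree)
    moreover have "f'$x = 0"
      unfolding f'_def c_def using degree_nonzero[of x] by simp
    ultimately have "wip E w f' f' \<le> K"
      unfolding K_def using M by (intro wip_self_le_of_wLip1)
    then have "wip E w (?J f') (?J f') \<le> K"
      using wip_self_resolvent_le order.trans by blast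
    then have K_div: "wip E w (?J f') (?J f') / ?d a \<le> K / ?d a" for a
      using degree_pos[of a] by (simp add: divide_right_mono)
    have bound: "\<bar>?J f' $ a / ?d a\<bar> \<le> 1 + K / ?d a" for a
      using abs_value_le_wip_self[of "?J f'" a] K_div[of a] by linarith
    show ?thesis
      using val bound[of x] bound[of y] abs_ge_self[of "?J f' $ x / ?d x"]
        abs_ge_minus_self[of "?J f' $ y / ?d y"] by linarith
  qed
  then show ?thesis by blast
qed

lemma resolvent_value_diff_pos:
  assumes "hconnected E" "x \<noteq> y"
  shows "\<exists>f\<in>wLip1 E w. 0 < resolvent E w lam f $ x / hdeg E w x - resolvent E w lam f $ y / hdeg E w y"
proof -
  let ?d = "hdeg E w"
  obtain u where u: "u \<in> hLap E w (delta x)"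
    using hLap_nonempty by blast
  define k where "k z = delta x $ z + lam * u$z / ?d z" for z
  define C where "C = (\<Sum>z\<in>UNIV. \<bar>k z\<bar>)"
  define \<epsilon> where "\<epsilon> = 1 / (2 * C + 1)"
  have k_le: "\<bar>k z\<bar> \<le> C" for z
    unfolding C_def by (rule member_le_sum) auto
  have "0 \<le> C" unfolding C_def by (simp add: sum_nonneg)
  then have "0 < \<epsilon>" unfolding \<epsilon>_def by simp
  define g where "g = (\<chi> z. \<epsilon> * ?d z * delta x $ z)"
  define f where "f = g + lam *\<^sub>R (\<epsilon> *\<^sub>R u)"
  have "Dinv E w g = \<epsilon> *\<^sub>R delta x"
    unfolding Dinv_def g_def using degree_nonzero by (simp add: vec_eq_iff)
  then have J: "resolvent E w lam f = g"
    using hLap_scaleR[OF \<open>0 < \<epsilon>\<close> u] by (intro resolvent_eqI[of "\<epsilon> *\<^sub>R u"]) (simp_all add: f_def)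
  have "\<bar>f$z / ?d z\<bar> \<le> 1/2" for z
  proof -
    have "f$z / ?d z = \<epsilon> * k z"
      unfolding f_def g_def k_def using degree_nonzero by (simp add: field_simps)
    then have "\<bar>f$z / ?d z\<bar> \<le> \<epsilon> * C"
      using \<open>0 < \<epsilon>\<close> k_le[of z] by (simp add: abs_mult)
    also have "\<dots> \<le> 1/2"
      unfolding \<epsilon>_def using \<open>0 \<le> C\<close> by (simp add: field_simps)
    finally show ?thesis .
  qed
  then have "f \<in> wLip1 E w"
    by (rule wLip1_if_bounded[OF assms(1)])
  moreover have "resolvent E w lam f $ x / ?d x - resolvent E w lam f $ y / ?d y = \<epsilon>"
    unfolding J g_def using degree_nonzero assms(2) by (simp add: delta_nth)
  ultimately show ?thesis
    using \<open>0 < \<epsilon>\<close> by auto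
qed

end

theorem mainTheorem6:
  fixes E :: "'v::finite set set" and w :: "'v set \<Rightarrow> real" and lam :: real
  assumes "hyper_graph E w"
    and "hconnected E"
    and "\<forall>x. hdeg E w x > 0"
    and "lam > 0"
  shows "\<forall>x y z.
          (KD E w lam x y = 0 \<longleftrightarrow> x = y) \<and>
          KD E w lam x y = KD E w lam y x \<and>
          KD E w lam x z \<le> KD E w lam x y + KD E w lam y z"
proof -
  interpret hgraph_resolvent E w lam
    using assms unfolding hyper_graph_def by unfold_locales auto
  define \<phi> where "\<phi> f a = resolvent E w lam f $ a / hdeg E w a" for f a
  have KD: "KD E w lam = (\<lambda>a b. SUP f\<in>wLip1 E w. \<phi> f a - \<phi> f b)"
    by (intro ext) (simp add: KD_def \<phi>_def wip_delta_diff)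
  show ?thesis
    unfolding KD
  proof (rule SUP_diff_metric[where \<iota> = uminus])
    show "wLip1 E w \<noteq> {}" "uminus ` wLip1 E w \<subseteq> wLip1 E w"
      using zero_in_wLip1 uminus_wLip1 by blast+
  qed (use resolvent_value_diff_bounded resolvent_value_diff_pos[OF assms(2)] in
        \<open>auto simp: \<phi>_def resolvent_uminus\<close>)
qed

end
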